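(* Let $D$ be a $3$-dicritical digraph, let $T$ be a subdigraph of $D$ that is a tournament, and let $S$ be a set of vertices of $T$ inducing a transitive tournament in $T$, with acyclic ordering $v_1,\dots,v_s$. Then for every $x\in V(T)\setminus S$ there is an increasing sequence of intervals $(I_1,I_2,I_3,I_4)$ of $S$ with $I_1\cup I_2\cup I_3\cup I_4=S$ such that, in $T$, $x$ dominates $I_1\cup I_3$ and $x$ is dominated by $I_2\cup I_4$.
   Context: A $2$-dicolouring is a map to $\{1,2\}$ whose colour classes induce acyclic subdigraphs. $D$ is $3$-dicritical if $D$ has no $2$-dicolouring but every proper subdigraph has one. A tournament has exactly one arc between any two distinct vertices; it is transitive if acyclic, and then its acyclic ordering $v_1,\dots,v_s$ is the unique ordering with every arc $v_iv_j$ satisfying $i<j$. An interval of $S$ is a set $\{v_i,\dots,v_j\}$ for $i,j\in[s]$ (possibly empty). An interval $\{v_{i_0},\dots,v_{j_0}\}$ is smaller than $\{v_{i_1},\dots,v_{j_1}\}$ if $j_0<i_1$; by convention the empty interval is both smaller and greater than every interval. A sequence $P_1,\dots,P_t$ of intervals is increasing if $P_i$ is smaller than $P_j$ whenever $i<j$. A vertex $x$ dominates a set $Y$ (and $Y$ is dominated by $x$) if $xy$ is an arc for every $y\in Y$. *)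

theory Defs
  imports Main
begin

type_synonym 'a digraph = "'a set \<times> ('a \<times> 'a) set"

definition verts :: "'a digraph \<Rightarrow> 'a set" where "verts G = fst G"
definition arcs :: "'a digraph \<Rightarrow> ('a \<times> 'a) set" where "arcs G = snd G"

text \<open>Finite, loopless digraphs (digons allowed).\<close>
definition digraph :: "'a digraph \<Rightarrow> bool" where
  "digraph G \<longleftrightarrow> finite (verts G) \<and> arcs G \<subseteq> verts G \<times> verts G
     \<and> (\<forall>v. (v, v) \<notin> arcs G)"

definition subdigraph :: "'a digraph \<Rightarrow> 'a digraph \<Rightarrow> bool" where
  "subdigraph H G \<longleftrightarrow> verts H \<subseteq> verts G \<and> arcs H \<subseteq> arcs G
     \<and> arcs H \<subseteq> verts H \<times> verts H"

definition induced_arcs :: "'a digraph \<Rightarrow> 'a set \<Rightarrow> ('a \<times> 'a) set" where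
  "induced_arcs G X = arcs G \<inter> (X \<times> X)"

definition two_dicolouring :: "'a digraph \<Rightarrow> ('a \<Rightarrow> nat) \<Rightarrow> bool" where
  "two_dicolouring G c \<longleftrightarrow> c ` verts G \<subseteq> {1, 2}
     \<and> (\<forall>i\<in>{1::nat, 2}. acyclic (induced_arcs G {v \<in> verts G. c v = i}))"

definition two_dicolourable :: "'a digraph \<Rightarrow> bool" where
  "two_dicolourable G \<longleftrightarrow> (\<exists>c. two_dicolouring G c)"

definition three_dicritical :: "'a digraph \<Rightarrow> bool" where
  "three_dicritical D \<longleftrightarrow> digraph D \<and> \<not> two_dicolourable D
     \<and> (\<forall>H. subdigraph H D \<and> H \<noteq> D \<longrightarrow> two_dicolourable H)"

definition tournament :: "'a digraph \<Rightarrow> bool" where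
  "tournament T \<longleftrightarrow> arcs T \<subseteq> verts T \<times> verts T \<and> (\<forall>v. (v, v) \<notin> arcs T)
     \<and> (\<forall>u\<in>verts T. \<forall>v\<in>verts T. u \<noteq> v \<longrightarrow> ((u, v) \<in> arcs T \<longleftrightarrow> (v, u) \<notin> arcs T))"

definition induces_transitive :: "'a digraph \<Rightarrow> 'a set \<Rightarrow> bool" where
  "induces_transitive T S \<longleftrightarrow> S \<subseteq> verts T \<and> acyclic (induced_arcs T S)"

text \<open>vs = [v_1,...,v_s] (0-indexed) is the acyclic ordering of T[S].\<close>
definition acyclic_ordering :: "'a digraph \<Rightarrow> 'a set \<Rightarrow> 'a list \<Rightarrow> bool" where
  "acyclic_ordering T S vs \<longleftrightarrow> distinct vs \<and> set vs = S
     \<and> (\<forall>i<length vs. \<forall>j<length vs. (vs ! i, vs ! j) \<in> arcs T \<longrightarrow> i < j)"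

text \<open>{v_i, ..., v_j} for indices i, j (empty if i > j); the empty set is always an interval.\<close>
definition seg :: "'a list \<Rightarrow> nat \<Rightarrow> nat \<Rightarrow> 'a set" where
  "seg vs i j = {vs ! k | k. i \<le> k \<and> k \<le> j}"

definition interval :: "'a list \<Rightarrow> 'a set \<Rightarrow> bool" where
  "interval vs I \<longleftrightarrow> I = {} \<or> (\<exists>i<length vs. \<exists>j<length vs. I = seg vs i j)"

definition interval_smaller :: "'a list \<Rightarrow> 'a set \<Rightarrow> 'a set \<Rightarrow> bool" where
  "interval_smaller vs I J \<longleftrightarrow> I = {} \<or> J = {} \<or>
     (\<exists>i0<length vs. \<exists>j0<length vs. \<exists>i1<length vs. \<exists>j1<length vs.
        I = seg vs i0 j0 \<and> J = seg vs i1 j1 \<and> j0 < i1)"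

definition increasing :: "'a list \<Rightarrow> 'a set list \<Rightarrow> bool" where
  "increasing vs Ps \<longleftrightarrow> (\<forall>P\<in>set Ps. interval vs P)
     \<and> (\<forall>i<length Ps. \<forall>j<length Ps. i < j \<longrightarrow> interval_smaller vs (Ps ! i) (Ps ! j))"

definition dominates :: "('a \<times> 'a) set \<Rightarrow> 'a \<Rightarrow> 'a set \<Rightarrow> bool" where
  "dominates A x Y \<longleftrightarrow> (\<forall>y\<in>Y. (x, y) \<in> A)"

definition dominated_by :: "('a \<times> 'a) set \<Rightarrow> 'a \<Rightarrow> 'a set \<Rightarrow> bool" where
  "dominated_by A x Y \<longleftrightarrow> (\<forall>y\<in>Y. (y, x) \<in> A)"

end

theory Submission
  imports Defs
begin

text \<open>Deleting an arc \<open>ad\<close> from a 3-dicritical digraph \<open>D\<close> leaves a 2-dicolourable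
digraph, and in any 2-dicolouring of \<open>D - ad\<close> the ends \<open>a\<close> and \<open>d\<close> get the same colour
and are joined by a monochromatic path from \<open>d\<close> to \<open>a\<close>. So every vertex \<open>u\<close> with
\<open>a \<rightarrow> u \<rightarrow> d\<close> gets the other colour, and these vertices induce an acyclic subdigraph.
If the arcs between \<open>x\<close> and the acyclic ordering alternated as \<open>v\<^sub>i \<rightarrow> x \<rightarrow> v\<^sub>j\<close>,
\<open>v\<^sub>k \<rightarrow> x \<rightarrow> v\<^sub>l\<close> with \<open>i < j < k < l\<close>, then \<open>x \<rightarrow> v\<^sub>j \<rightarrow> v\<^sub>k \<rightarrow> x\<close> would be a directed
triangle among such vertices for the arc \<open>v\<^sub>i v\<^sub>l\<close>. Hence, read along the ordering,
the arcs at \<open>x\<close> change direction at most three times, which yields the four intervals.\<close>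

lemma verts_pair [simp]: "verts (V, A) = V"
  and arcs_pair [simp]: "arcs (V, A) = A"
  by (simp_all add: verts_def arcs_def)

lemma induced_arcs_insert_arc:
  "induced_arcs (V, insert (a, d) A) X =
     (if a \<in> X \<and> d \<in> X then insert (a, d) (induced_arcs (V, A) X) else induced_arcs (V, A) X)"
  unfolding induced_arcs_def by auto

lemma two_dicolouring_insert_arcE:
  assumes "two_dicolouring (V, A) \<phi>" and "\<not> two_dicolouring (V, insert (a, d) A) \<phi>"
  obtains i where "i \<in> {1, 2}" "a \<in> V" "d \<in> V" "\<phi> a = i" "\<phi> d = i"
    "(d, a) \<in> (induced_arcs (V, A) {v \<in> V. \<phi> v = i})\<^sup>*"
proof -
  let ?C = "\<lambda>i. {v \<in> V. \<phi> v = i}"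
  obtain i where i: "i \<in> {1, 2}" and "\<not> acyclic (induced_arcs (V, insert (a, d) A) (?C i))"
    using assms unfolding two_dicolouring_def by auto
  moreover have "acyclic (induced_arcs (V, A) (?C i))"
    using assms(1) i unfolding two_dicolouring_def by auto
  ultimately have "a \<in> ?C i \<and> d \<in> ?C i \<and> (d, a) \<in> (induced_arcs (V, A) (?C i))\<^sup>*"
    unfolding induced_arcs_insert_arc by (simp split: if_split_asm)
  with i show thesis
    using that by simp
qed

lemma three_dicritical_delete_arcE:
  assumes "three_dicritical D" and "(a, d) \<in> arcs D"
  obtains \<phi> i where "two_dicolouring (verts D, arcs D - {(a, d)}) \<phi>" "i \<in> {1, 2}"
    "\<phi> a = i" "\<phi> d = i"
    "(d, a) \<in> (induced_arcs (verts D, arcs D - {(a, d)}) {v \<in> verts D. \<phi> v = i})\<^sup>*"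
proof -
  let ?H = "(verts D, arcs D - {(a, d)})"
  have "arcs D \<subseteq> verts D \<times> verts D"
    using assms(1) unfolding three_dicritical_def digraph_def by blast
  then have "subdigraph ?H D"
    unfolding subdigraph_def by auto
  moreover have "?H \<noteq> D"
    using assms(2) by (metis Diff_iff arcs_pair insertI1)
  ultimately obtain \<phi> where \<phi>: "two_dicolouring ?H \<phi>"
    using assms(1) unfolding three_dicritical_def two_dicolourable_def by blast
  have "D = (verts D, insert (a, d) (arcs D - {(a, d)}))"
    using assms(2) by (simp add: insert_absorb verts_def arcs_def)
  then have "\<not> two_dicolouring (verts D, insert (a, d) (arcs D - {(a, d)})) \<phi>"
    using assms(1) unfolding three_dicritical_def two_dicolourable_def by metis
  then show thesis
    by (rule two_dicolouring_insert_arcE[OF \<phi>]) (rule that[OF \<phi>])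
qed

lemma three_dicritical_common_neighbours_acyclic:
  assumes "three_dicritical D" and "(a, d) \<in> arcs D"
  shows "acyclic (induced_arcs D {u. (a, u) \<in> arcs D \<and> (u, d) \<in> arcs D})"
proof -
  obtain \<phi> i where \<phi>: "two_dicolouring (verts D, arcs D - {(a, d)}) \<phi>"
    and i: "i \<in> {1, 2}" "\<phi> a = i" "\<phi> d = i"
    and return_path:
      "(d, a) \<in> (induced_arcs (verts D, arcs D - {(a, d)}) {v \<in> verts D. \<phi> v = i})\<^sup>*"
    using three_dicritical_delete_arcE[OF assms] by blast
  let ?R = "\<lambda>k. induced_arcs (verts D, arcs D - {(a, d)}) {v \<in> verts D. \<phi> v = k}"
  let ?N = "{u. (a, u) \<in> arcs D \<and> (u, d) \<in> arcs D}"
  have loopfree: "\<And>v. (v, v) \<notin> arcs D"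
    and closed: "arcs D \<subseteq> verts D \<times> verts D"
    using assms(1) unfolding three_dicritical_def digraph_def by auto
  have "\<phi> u \<noteq> i" if "u \<in> ?N" for u
  proof
    assume "\<phi> u = i"
    with that i loopfree closed have "(a, u) \<in> ?R i" "(u, d) \<in> ?R i"
      unfolding induced_arcs_def by auto
    with return_path have "(a, a) \<in> (?R i)\<^sup>+"
      by (meson r_into_trancl' trancl_into_trancl trancl_rtrancl_trancl)
    with \<phi> i show False
      unfolding two_dicolouring_def acyclic_def by auto
  qed
  moreover have "\<phi> ` verts D \<subseteq> {1, 2}"
    using \<phi> unfolding two_dicolouring_def by simp
  ultimately have "?N \<subseteq> {v \<in> verts D. \<phi> v = 3 - i}"
    using i closed by fastforce
  moreover have "a \<notin> ?N"
    using loopfree by blast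
  ultimately have "induced_arcs D ?N \<subseteq> ?R (3 - i)"
    unfolding induced_arcs_def by auto
  moreover have "acyclic (?R (3 - i))"
    using \<phi> i unfolding two_dicolouring_def by auto
  ultimately show ?thesis
    using acyclic_subset by blast
qed

lemma first_index_from:
  fixes m n :: nat
  assumes "m \<le> n"
  obtains t where "m \<le> t" "t \<le> n" "\<And>k. m \<le> k \<Longrightarrow> k < t \<Longrightarrow> \<not> Q k" "t < n \<Longrightarrow> Q t"
proof (cases "\<exists>k. m \<le> k \<and> k < n \<and> Q k")
  case True
  let ?t = "LEAST k. m \<le> k \<and> k < n \<and> Q k"
  have t: "m \<le> ?t \<and> ?t < n \<and> Q ?t"
    using LeastI_ex[OF True] .
  moreover have "\<not> Q k" if "m \<le> k" "k < ?t" for k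
    using not_less_Least[OF that(2)] that t by auto
  ultimately show thesis
    using that[of ?t] by auto
next
  case False
  then show thesis
    using that[of n] assms by auto
qed

lemma no_alternation_imp_four_blocks:
  fixes n :: nat
  assumes "\<And>i j k l. i < j \<Longrightarrow> j < k \<Longrightarrow> k < l \<Longrightarrow> l < n \<Longrightarrow>
      \<not> P i \<Longrightarrow> P j \<Longrightarrow> \<not> P k \<Longrightarrow> P l \<Longrightarrow> False"
  obtains t1 t2 t3 where "t1 \<le> t2" "t2 \<le> t3" "t3 \<le> n"
    "\<And>k. k < n \<Longrightarrow> P k \<longleftrightarrow> k < t1 \<or> t2 \<le> k \<and> k < t3"
proof -
  obtain t1 where t1: "t1 \<le> n" "\<And>k. k < t1 \<Longrightarrow> P k" "t1 < n \<Longrightarrow> \<not> P t1"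
    using first_index_from[of 0 n "\<lambda>k. \<not> P k"] by auto
  obtain t2 where t2: "t1 \<le> t2" "t2 \<le> n" "\<And>k. t1 \<le> k \<Longrightarrow> k < t2 \<Longrightarrow> \<not> P k"
    "t2 < n \<Longrightarrow> P t2"
    using first_index_from[OF t1(1), of P] by auto
  obtain t3 where t3: "t2 \<le> t3" "t3 \<le> n" "\<And>k. t2 \<le> k \<Longrightarrow> k < t3 \<Longrightarrow> P k"
    "t3 < n \<Longrightarrow> \<not> P t3"
    using first_index_from[OF t2(2), of "\<lambda>k. \<not> P k"] by auto
  have tail: "\<not> P k" if "t3 \<le> k" "k < n" for k
  proof
    assume "P k"
    with t3(4) that have "t3 < k" "t3 < n"
      by (auto simp: le_less)
    with t2(1,4) t3(1,4) have "t2 < t3" "P t2"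
      by (auto simp: le_less)
    with t1(3) t2(1) \<open>t3 < n\<close> have "t1 < t2" "\<not> P t1"
      by (auto simp: le_less)
    with assms[of t1 t2 t3 k] \<open>t2 < t3\<close> \<open>t3 < k\<close> \<open>P t2\<close> t3(4) \<open>t3 < n\<close> \<open>P k\<close> that(2)
    show False
      by blast
  qed
  show thesis
  proof (rule that[OF t2(1) t3(1) t3(2)])
    fix k assume "k < n"
    consider "k < t1" | "t1 \<le> k" "k < t2" | "t2 \<le> k" "k < t3" | "t3 \<le> k"
      by linarith
    then show "P k \<longleftrightarrow> k < t1 \<or> t2 \<le> k \<and> k < t3"
      using t1(2) t2(3) t3(3) tail[OF _ \<open>k < n\<close>] t1(1) t2(1) by cases auto
  qed
qed

definition block :: "'a list \<Rightarrow> nat \<Rightarrow> nat \<Rightarrow> 'a set" where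
  "block vs l r = (\<lambda>k. vs ! k) ` {l..<r}"

lemma block_eq_seg:
  assumes "l < r"
  shows "block vs l r = seg vs l (r - 1)"
proof -
  have "{l..<r} = {l..r - 1}"
    using assms by auto
  then show ?thesis
    unfolding block_def seg_def by auto
qed

lemma block_empty: "r \<le> l \<Longrightarrow> block vs l r = {}"
  unfolding block_def by simp

lemma interval_block:
  assumes "r \<le> length vs"
  shows "interval vs (block vs l r)"
proof (cases "l < r")
  case True
  with assms have "l < length vs" "r - 1 < length vs"
    by auto
  then show ?thesis
    unfolding interval_def block_eq_seg[OF True] by blast
next
  case False
  then show ?thesis
    unfolding interval_def by (simp add: block_empty)
qed

lemma interval_smaller_block:
  assumes "r1 \<le> l2" and "r2 \<le> length vs"
  shows "interval_smaller vs (block vs l1 r1) (block vs l2 r2)"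
proof (cases "l1 < r1 \<and> l2 < r2")
  case True
  with assms have "l1 < length vs" "r1 - 1 < length vs" "l2 < length vs" "r2 - 1 < length vs"
      "r1 - 1 < l2"
    by auto
  then show ?thesis
    unfolding interval_smaller_def block_eq_seg[of l1 r1 vs, OF conjunct1[OF True]]
      block_eq_seg[of l2 r2 vs, OF conjunct2[OF True]]
    by blast
next
  case False
  then show ?thesis
    unfolding interval_smaller_def by (auto simp: block_empty)
qed

lemma block_Un: "l \<le> m \<Longrightarrow> m \<le> r \<Longrightarrow> block vs l m \<union> block vs m r = block vs l r"
  unfolding block_def by (simp add: image_Un[symmetric] ivl_disj_un)

lemma block_all: "block vs 0 (length vs) = set vs"
  unfolding block_def by (auto simp: set_conv_nth)

lemma increasing_blocks:
  assumes "sorted ts" and "\<forall>t\<in>set ts. t \<le> length vs"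
  shows "increasing vs (map2 (block vs) ts (tl ts))"
  unfolding increasing_def
proof (intro conjI ballI allI impI)
  fix P assume "P \<in> set (map2 (block vs) ts (tl ts))"
  then obtain i where "i < length ts - 1" "P = block vs (ts ! i) (ts ! Suc i)"
    by (auto simp: in_set_conv_nth nth_tl)
  then show "interval vs P"
    using assms(2) by (simp add: interval_block)
next
  fix i j assume ij: "i < length (map2 (block vs) ts (tl ts))"
    "j < length (map2 (block vs) ts (tl ts))" "i < j"
  then have "ts ! Suc i \<le> ts ! j"
    using assms(1) by (simp add: sorted_nth_mono)
  with ij show
    "interval_smaller vs (map2 (block vs) ts (tl ts) ! i) (map2 (block vs) ts (tl ts) ! j)"
    using assms(2) by (simp add: nth_tl interval_smaller_block)
qed

lemma three_dicritical_no_triangle_in_common_neighbours: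
  assumes "three_dicritical D" and "(a, d) \<in> arcs D"
    and "\<forall>u\<in>{x, y, z}. (a, u) \<in> arcs D \<and> (u, d) \<in> arcs D"
    and "(x, y) \<in> arcs D" "(y, z) \<in> arcs D" "(z, x) \<in> arcs D"
  shows False
proof -
  let ?R = "induced_arcs D {u. (a, u) \<in> arcs D \<and> (u, d) \<in> arcs D}"
  have "(x, y) \<in> ?R" "(y, z) \<in> ?R" "(z, x) \<in> ?R"
    using assms(3-) unfolding induced_arcs_def by auto
  then have "(x, x) \<in> ?R\<^sup>+"
    by (meson trancl.r_into_trancl trancl.trancl_into_trancl)
  with three_dicritical_common_neighbours_acyclic[OF assms(1,2)] show False
    unfolding acyclic_def by blast
qed

lemma three_dicritical_no_alternation:
  assumes "three_dicritical D"
    and forward: "\<And>i j. i < j \<Longrightarrow> j < length vs \<Longrightarrow> (vs ! i, vs ! j) \<in> arcs D"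
    and "i < j" "j < k" "k < l" "l < length vs"
    and "(vs ! i, x) \<in> arcs D" "(x, vs ! j) \<in> arcs D"
    and "(vs ! k, x) \<in> arcs D" "(x, vs ! l) \<in> arcs D"
  shows False
proof -
  have "(vs ! i, vs ! l) \<in> arcs D" "(vs ! j, vs ! k) \<in> arcs D"
    using forward assms(3-6) by simp_all
  moreover have "\<forall>u\<in>{x, vs ! j, vs ! k}. (vs ! i, u) \<in> arcs D \<and> (u, vs ! l) \<in> arcs D"
    using forward assms(3-) by auto
  ultimately show False
    using three_dicritical_no_triangle_in_common_neighbours[OF assms(1)] assms(8,9) by blast
qed

lemma tournament_converse_arc_iff:
  assumes "tournament T" and "u \<in> verts T" "v \<in> verts T" "u \<noteq> v"
  shows "(v, u) \<in> arcs T \<longleftrightarrow> (u, v) \<notin> arcs T"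
  using assms unfolding tournament_def by blast

lemma acyclic_ordering_forward_arc:
  assumes "tournament T" and "S \<subseteq> verts T" and "acyclic_ordering T S vs"
    and "i < j" "j < length vs"
  shows "(vs ! i, vs ! j) \<in> arcs T"
proof -
  have "vs ! i \<noteq> vs ! j" "vs ! i \<in> verts T" "vs ! j \<in> verts T"
    using assms unfolding acyclic_ordering_def by (auto simp: nth_eq_iff_index_eq)
  moreover have "(vs ! j, vs ! i) \<notin> arcs T"
    using assms unfolding acyclic_ordering_def by (meson less_asym less_trans)
  ultimately show ?thesis
    using tournament_converse_arc_iff[OF assms(1)] by blast
qed

lemma three_dicritical_subtournament_no_alternation:
  assumes "three_dicritical D" and "subdigraph T D" and "tournament T"
    and "S \<subseteq> verts T" and "acyclic_ordering T S vs" and "x \<in> verts T - S"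
    and "i < j" "j < k" "k < l" "l < length vs"
    and "(x, vs ! i) \<notin> arcs T" "(x, vs ! j) \<in> arcs T"
    and "(x, vs ! k) \<notin> arcs T" "(x, vs ! l) \<in> arcs T"
  shows False
proof -
  have TD: "arcs T \<subseteq> arcs D"
    using assms(2) unfolding subdigraph_def by blast
  have in_arc: "(vs ! m, x) \<in> arcs D" if "m < length vs" "(x, vs ! m) \<notin> arcs T" for m
  proof -
    have "vs ! m \<in> S"
      using assms(5) that(1) unfolding acyclic_ordering_def by auto
    with assms(4,6) that(2) show ?thesis
      using tournament_converse_arc_iff[OF assms(3), of x "vs ! m"] TD by auto
  qed
  have "(vs ! i, x) \<in> arcs D" "(vs ! k, x) \<in> arcs D"
    using in_arc assms(7-11,13) by simp_all
  moreover have "(vs ! m, vs ! m') \<in> arcs D" if "m < m'" "m' < length vs" for m m'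
    using acyclic_ordering_forward_arc[OF assms(3-5) that] TD by blast
  ultimately show False
    using three_dicritical_no_alternation[OF assms(1) _ assms(7-10)] assms(12,14) TD by blast
qed

theorem lemma16:
  fixes D T :: "'a digraph" and S :: "'a set" and vs :: "'a list" and x :: 'a
  assumes "three_dicritical D"
    and "subdigraph T D" and "tournament T"
    and "induces_transitive T S"
    and "acyclic_ordering T S vs"
    and "x \<in> verts T - S"
  shows "\<exists>I1 I2 I3 I4. increasing vs [I1, I2, I3, I4]
           \<and> I1 \<union> I2 \<union> I3 \<union> I4 = S
           \<and> dominates (arcs T) x (I1 \<union> I3)
           \<and> dominated_by (arcs T) x (I2 \<union> I4)"
proof -
  let ?n = "length vs"
  have S: "S \<subseteq> verts T" "set vs = S"
    using assms(4,5) unfolding induces_transitive_def acyclic_ordering_def by auto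
  obtain t1 t2 t3 where t: "t1 \<le> t2" "t2 \<le> t3" "t3 \<le> ?n"
    and out_arc: "\<And>k. k < ?n \<Longrightarrow> (x, vs ! k) \<in> arcs T \<longleftrightarrow> k < t1 \<or> t2 \<le> k \<and> k < t3"
    using no_alternation_imp_four_blocks[of ?n "\<lambda>k. (x, vs ! k) \<in> arcs T"]
      three_dicritical_subtournament_no_alternation[OF assms(1-3) S(1) assms(5,6)] by blast
  have in_arc: "(vs ! k, x) \<in> arcs T" if "k < ?n" "(x, vs ! k) \<notin> arcs T" for k
    using tournament_converse_arc_iff[OF assms(3), of x "vs ! k"] that assms(6) S nth_mem by blast
  let ?I1 = "block vs 0 t1" and ?I2 = "block vs t1 t2" and ?I3 = "block vs t2 t3"
    and ?I4 = "block vs t3 ?n"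
  have "increasing vs [?I1, ?I2, ?I3, ?I4]"
    using increasing_blocks[of "[0, t1, t2, t3, ?n]" vs] t by simp
  moreover have "?I1 \<union> ?I2 \<union> ?I3 \<union> ?I4 = S"
    using t by (simp add: block_Un block_all S(2))
  moreover have "dominates (arcs T) x (?I1 \<union> ?I3)"
    unfolding dominates_def block_def using t out_arc by auto
  moreover have "dominated_by (arcs T) x (?I2 \<union> ?I4)"
    unfolding dominated_by_def block_def using t out_arc in_arc by auto
  ultimately show ?thesis
    by blast
qed

end
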